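(* Let $H$ be a complex Hadamard matrix. Let $\{R,R_1,R_2\}$ be a partition of the set of rows of $H$ and $\{C,C_1,C_2\}$ a partition of the set of columns of $H$, and suppose there is $s\in\mathbb{C}$ such that: (1) every column of the submatrix with rows $R$ and columns $C$ has entry sum $s$; (2) every column of the submatrix with rows $R_1$ and columns $C_1$ has entry sum $-\overline{s}$; (3) the submatrix with rows $R$ and columns $C_1$ and the submatrix with rows $R_1$ and columns $C$ are all-ones matrices; (4) every column of the submatrix with rows $R$ and columns $C_2$, and every column of the submatrix with rows $R_1$ and columns $C_2$, has entry sum $0$. Then for every $z\in\mathbb{T}$, the matrix $K$ obtained from $H$ by multiplying every entry of the submatrix with rows $R_1$ and columns $C_2$ by $z$, and simultaneously every entry of the submatrix with rows $R_2$ and columns $C_1$ by $\overline{z}$ (all other entries unchanged), is a complex Hadamard matrix.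
   Context: $\mathbb{T}$ is the set of complex numbers of modulus $1$. A complex Hadamard matrix of order $n$ is an $n\times n$ matrix with all entries in $\mathbb{T}$ and $HH^{\ast}=nI_n$. *)

theory Defs
  imports "HOL-Analysis.Analysis"
begin

definition unit_circle :: "complex set" where
  "unit_circle = {z. norm z = 1}"

definition adjoint_mat :: "complex^'n^'m \<Rightarrow> complex^'m^'n" where
  "adjoint_mat A = (\<chi> i j. cnj (A $ j $ i))"

definition complex_hadamard :: "complex^'n^'n \<Rightarrow> bool" where
  "complex_hadamard H \<longleftrightarrow>
     (\<forall>i j. H $ i $ j \<in> unit_circle) \<and>
     H ** adjoint_mat H = of_nat CARD('n) *\<^sub>R mat 1"

definition partition3 :: "'a set \<Rightarrow> 'a set \<Rightarrow> 'a set \<Rightarrow> 'a set \<Rightarrow> bool" where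
  "partition3 U A B C \<longleftrightarrow> A \<noteq> {} \<and> B \<noteq> {} \<and> C \<noteq> {} \<and>
     A \<inter> B = {} \<and> A \<inter> C = {} \<and> B \<inter> C = {} \<and> A \<union> B \<union> C = U"

end

theory Submission
  imports Defs
begin

text \<open>
  Twisting multiplies entry (i, j) of H by a unimodular factor that depends only on j and on the
  row block of i: 1 on R, a_j on R1, b_j on R2. So the inner product of columns j and k changes by
  (conj a_j a_k - 1) S1 + (conj b_j b_k - 1) S2, where S1 and S2 are the partial inner products
  over R1 and R2. Both coefficients vanish when j and k lie in the same column block. For j in C
  and k in C1 (resp. C2; resp. j in C1 and k in C2) the all-ones blocks turn the column-sum
  hypotheses into partial inner products, and orthogonality of the columns of H gives S2 = 0
  (resp. S1 = 0; resp. S1 + S2 = 0, which suffices since both coefficients are then z - 1).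
  The remaining pairs follow by conjugate symmetry, so K has the Gram matrix of H; for square
  matrices H* H = n I is equivalent to H H* = n I.
\<close>

lemma adjoint_mat_adjoint_mat [simp]: "adjoint_mat (adjoint_mat A) = A"
  by (simp add: adjoint_mat_def vec_eq_iff)

lemma adjoint_mat_mult_scaleR_mat_1_commute:
  fixes A :: "complex^'n^'n"
  assumes "A ** adjoint_mat A = c *\<^sub>R mat 1" and "c \<noteq> 0"
  shows "adjoint_mat A ** A = c *\<^sub>R mat 1"
proof -
  have "A ** ((1/c) *\<^sub>R adjoint_mat A) = (1/c) *\<^sub>R (A ** adjoint_mat A)"
    by (metis matrix_scalar_ac scalar_matrix_assoc)
  then have "((1/c) *\<^sub>R adjoint_mat A) ** A = mat 1"
    using assms by (simp add: matrix_left_right_inverse)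
  then have "(1/c) *\<^sub>R (adjoint_mat A ** A) = mat 1"
    by (simp add: scalar_matrix_assoc)
  then have "c *\<^sub>R ((1/c) *\<^sub>R (adjoint_mat A ** A)) = c *\<^sub>R mat 1"
    by simp
  then show ?thesis
    using assms(2) by simp
qed

definition col_inner :: "complex^'n^'m \<Rightarrow> 'm set \<Rightarrow> 'n \<Rightarrow> 'n \<Rightarrow> complex" where
  "col_inner A X j k = (\<Sum>i\<in>X. cnj (A $ i $ j) * A $ i $ k)"

lemma cnj_col_inner: "cnj (col_inner A X j k) = col_inner A X k j"
  by (simp add: col_inner_def mult.commute)

lemma adjoint_mat_mult_self_eq_scaleR_mat_1_iff:
  fixes A :: "complex^'n^'m"
  shows "adjoint_mat A ** A = c *\<^sub>R mat 1 \<longleftrightarrow>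
    (\<forall>j k. col_inner A UNIV j k = (if j = k then of_real c else 0))"
  by (auto simp: vec_eq_iff matrix_matrix_mult_def adjoint_mat_def mat_def col_inner_def
      scaleR_conv_of_real[where x = "1 :: complex"])

lemma complex_hadamard_iff_col_inner:
  fixes H :: "complex^'n^'n"
  shows "complex_hadamard H \<longleftrightarrow> (\<forall>i j. H $ i $ j \<in> unit_circle) \<and>
    (\<forall>j k. col_inner H UNIV j k = (if j = k then of_nat CARD('n) else 0))"
proof -
  have "H ** adjoint_mat H = c *\<^sub>R mat 1 \<longleftrightarrow> adjoint_mat H ** H = c *\<^sub>R mat 1"
    if "c \<noteq> 0" for c
    using that adjoint_mat_mult_scaleR_mat_1_commute[of H c]
      adjoint_mat_mult_scaleR_mat_1_commute[of "adjoint_mat H" c] by auto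
  then show ?thesis
    unfolding complex_hadamard_def adjoint_mat_mult_self_eq_scaleR_mat_1_iff by simp
qed

lemma sum_partition3:
  fixes f :: "'a::finite \<Rightarrow> 'b::comm_monoid_add"
  assumes "partition3 UNIV A B C"
  shows "sum f UNIV = sum f A + sum f B + sum f C"
proof -
  have "UNIV = (A \<union> B) \<union> C" "A \<inter> B = {}" "(A \<union> B) \<inter> C = {}"
    using assms unfolding partition3_def by auto
  then show ?thesis
    by (metis finite sum.union_disjoint)
qed

lemma col_inner_partition3:
  "partition3 UNIV R R1 R2 \<Longrightarrow>
    col_inner A UNIV j k = col_inner A R j k + col_inner A R1 j k + col_inner A R2 j k"
  unfolding col_inner_def by (rule sum_partition3)

lemma col_inner_row_rescale:
  fixes H K :: "complex^'n^'m"
  assumes rows: "partition3 UNIV R R1 R2"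
    and "\<And>i j. i \<in> R \<Longrightarrow> K $ i $ j = H $ i $ j"
    and "\<And>i j. i \<in> R1 \<Longrightarrow> K $ i $ j = a j * H $ i $ j"
    and "\<And>i j. i \<in> R2 \<Longrightarrow> K $ i $ j = b j * H $ i $ j"
  shows "col_inner K UNIV j k = col_inner H UNIV j k
    + (cnj (a j) * a k - 1) * col_inner H R1 j k + (cnj (b j) * b k - 1) * col_inner H R2 j k"
proof -
  have "col_inner K R j k = col_inner H R j k"
    "col_inner K R1 j k = cnj (a j) * a k * col_inner H R1 j k"
    "col_inner K R2 j k = cnj (b j) * b k * col_inner H R2 j k"
    by (simp_all add: col_inner_def sum_distrib_left assms(2-4) mult_ac)
  then show ?thesis
    unfolding col_inner_partition3[OF rows, of K] col_inner_partition3[OF rows, of H]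
    by (simp add: algebra_simps)
qed

locale hadamard_twist_data =
  fixes H :: "complex^'n^'n" and R R1 R2 C C1 C2 :: "'n set" and s :: complex
  assumes hadamard: "complex_hadamard H"
    and rows: "partition3 UNIV R R1 R2"
    and cols: "partition3 UNIV C C1 C2"
    and sum_R_C: "\<forall>j\<in>C. (\<Sum>i\<in>R. H $ i $ j) = s"
    and sum_R1_C1: "\<forall>j\<in>C1. (\<Sum>i\<in>R1. H $ i $ j) = - cnj s"
    and ones_R_C1: "\<forall>i\<in>R. \<forall>j\<in>C1. H $ i $ j = 1"
    and ones_R1_C: "\<forall>i\<in>R1. \<forall>j\<in>C. H $ i $ j = 1"
    and sum_R_C2: "\<forall>j\<in>C2. (\<Sum>i\<in>R. H $ i $ j) = 0"
    and sum_R1_C2: "\<forall>j\<in>C2. (\<Sum>i\<in>R1. H $ i $ j) = 0"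
begin

definition twist :: "complex \<Rightarrow> complex^'n^'n" where
  "twist z = (\<chi> i j. if i \<in> R1 \<and> j \<in> C2 then z * H $ i $ j
                    else if i \<in> R2 \<and> j \<in> C1 then cnj z * H $ i $ j
                    else H $ i $ j)"

lemma col_inner_H: "col_inner H UNIV j k = (if j = k then of_nat CARD('n) else 0)"
  using hadamard by (simp add: complex_hadamard_iff_col_inner)

lemma col_inner_R2_C_C1:
  assumes "j \<in> C" "k \<in> C1"
  shows "col_inner H R2 j k = 0"
proof -
  have "j \<noteq> k"
    using assms cols by (auto simp: partition3_def)
  moreover have "col_inner H R j k = cnj s"
    using assms sum_R_C ones_R_C1 by (simp add: col_inner_def flip: cnj_sum)
  moreover have "col_inner H R1 j k = - cnj s"
    using assms sum_R1_C1 ones_R1_C by (simp add: col_inner_def)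
  ultimately show ?thesis
    using col_inner_partition3[OF rows, of H j k] by (simp add: col_inner_H)
qed

lemma col_inner_R1_C_C2:
  assumes "j \<in> C" "k \<in> C2"
  shows "col_inner H R1 j k = 0"
  using assms sum_R1_C2 ones_R1_C by (simp add: col_inner_def)

lemma col_inner_R1_R2_C1_C2:
  assumes "j \<in> C1" "k \<in> C2"
  shows "col_inner H R1 j k + col_inner H R2 j k = 0"
proof -
  have "j \<noteq> k"
    using assms cols by (auto simp: partition3_def)
  moreover have "col_inner H R j k = 0"
    using assms sum_R_C2 ones_R_C1 by (simp add: col_inner_def)
  ultimately show ?thesis
    using col_inner_partition3[OF rows, of H j k] by (simp add: col_inner_H add.assoc)
qed

lemma col_inner_twist:
  assumes "z \<in> unit_circle"
  shows "col_inner (twist z) UNIV j k = col_inner H UNIV j k"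
proof -
  have z: "cnj z * z = 1"
    using assms by (simp add: unit_circle_def mult.commute flip: complex_norm_square)
  define a where "a j = (if j \<in> C2 then z else 1)" for j
  define b where "b j = (if j \<in> C1 then cnj z else 1)" for j
  have defect: "col_inner (twist z) UNIV j k = col_inner H UNIV j k
      + (cnj (a j) * a k - 1) * col_inner H R1 j k + (cnj (b j) * b k - 1) * col_inner H R2 j k"
    for j k
    by (rule col_inner_row_rescale[OF rows])
      (use rows in \<open>auto simp: twist_def a_def b_def partition3_def\<close>)
  have block: "j \<in> C \<or> j \<in> C1 \<or> j \<in> C2" for j
    using cols by (auto simp: partition3_def)
  have disjoint: "C \<inter> C1 = {}" "C \<inter> C2 = {}" "C1 \<inter> C2 = {}"
    using cols by (auto simp: partition3_def)
  have same_block: "col_inner (twist z) UNIV j k = col_inner H UNIV j k"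
    if "j \<in> C \<and> k \<in> C \<or> j \<in> C1 \<and> k \<in> C1 \<or> j \<in> C2 \<and> k \<in> C2" for j k
  proof -
    have "a j = a k" "b j = b k"
      using that disjoint by (auto simp: a_def b_def)
    then show ?thesis
      using z by (simp add: defect a_def b_def mult.commute)
  qed
  have C_C1: "col_inner (twist z) UNIV j k = col_inner H UNIV j k" if "j \<in> C" "k \<in> C1" for j k
    using that disjoint by (auto simp: defect a_def b_def col_inner_R2_C_C1)
  have C_C2: "col_inner (twist z) UNIV j k = col_inner H UNIV j k" if "j \<in> C" "k \<in> C2" for j k
    using that disjoint by (auto simp: defect a_def b_def col_inner_R1_C_C2)
  have C1_C2: "col_inner (twist z) UNIV j k = col_inner H UNIV j k" if "j \<in> C1" "k \<in> C2" for j k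
  proof -
    have "cnj (a j) * a k - 1 = z - 1" "cnj (b j) * b k - 1 = z - 1"
      using that disjoint by (auto simp: a_def b_def)
    then show ?thesis
      using col_inner_R1_R2_C1_C2[OF that] by (simp add: defect flip: distrib_left)
  qed
  have swap: "col_inner (twist z) UNIV j k = col_inner H UNIV j k"
    if "col_inner (twist z) UNIV k j = col_inner H UNIV k j" for j k
    using that by (metis cnj_col_inner)
  show ?thesis
    using block[of j] block[of k]
    by (elim disjE) (blast intro: same_block C_C1 C_C2 C1_C2 swap)+
qed

lemma complex_hadamard_twist:
  assumes "z \<in> unit_circle"
  shows "complex_hadamard (twist z)"
proof -
  have "twist z $ i $ j \<in> unit_circle" for i j
    using hadamard assms
    by (simp add: twist_def complex_hadamard_def unit_circle_def norm_mult)
  then show ?thesis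
    using hadamard by (simp add: complex_hadamard_iff_col_inner col_inner_twist[OF assms])
qed

end

theorem theorem6p7:
  fixes H :: "complex^'n^'n" and R R1 R2 C C1 C2 :: "'n set" and s :: complex
  assumes "complex_hadamard H"
    and "partition3 UNIV R R1 R2"
    and "partition3 UNIV C C1 C2"
    and "\<forall>j\<in>C. (\<Sum>i\<in>R. H $ i $ j) = s"
    and "\<forall>j\<in>C1. (\<Sum>i\<in>R1. H $ i $ j) = - cnj s"
    and "\<forall>i\<in>R. \<forall>j\<in>C1. H $ i $ j = 1"
    and "\<forall>i\<in>R1. \<forall>j\<in>C. H $ i $ j = 1"
    and "\<forall>j\<in>C2. (\<Sum>i\<in>R. H $ i $ j) = 0"
    and "\<forall>j\<in>C2. (\<Sum>i\<in>R1. H $ i $ j) = 0"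
  shows "\<forall>z\<in>unit_circle. complex_hadamard
           ((\<chi> i j. if i \<in> R1 \<and> j \<in> C2 then z * H $ i $ j
                    else if i \<in> R2 \<and> j \<in> C1 then cnj z * H $ i $ j
                    else H $ i $ j) :: complex^'n^'n)"
proof -
  interpret hadamard_twist_data H R R1 R2 C C1 C2 s
    using assms by unfold_locales
  show ?thesis
    using complex_hadamard_twist by (simp add: twist_def)
qed

end
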